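(* The groups $\mathbb{G}_r(N)$, for $(r,N)\in\{1,\infty\}\times\{0,2,3,4,\ldots\}$, are pairwise nonisomorphic as topological groups.
   Context: All groups are Abelian. A value on $G$ is $p\colon G\to[0,\infty)$ with $p(x)=0\iff x=0$, $p(-x)=p(x)$, $p(x+y)\leqslant p(x)+p(y)$; it induces the metric $p(x-y)$ and hence a group topology. Class $\mathcal{O}_0$: $\lim_n p(na)/n=0$ for all $a$. $\mathfrak{G}_r(N)$: separable valued Abelian groups of class $\mathcal{O}_0$ with $p\leqslant r$ (vacuous if $r=\infty$) and of exponent $N$ if $N\neq0$. $\mathbb{G}_r(N)$ is the valued Abelian group, unique up to isometric group isomorphism, which (G1) is complete and in $\mathfrak{G}_r(N)$; (G2) for every finite valued Abelian group $(H,+,q)$ (of exponent $N$ if $N\neq0$) with $q\leqslant r$, subgroup $K$, isometric homomorphism $\varphi\colon K\to\mathbb{G}_r(N)$ and $\varepsilon\in(0,1)$, there is a homomorphism $\varphi_\varepsilon\colon H\to\mathbb{G}_r(N)$ with $p(\varphi(x)-\varphi_\varepsilon(x))\leqslant\varepsilon$ on $K$ and $(1-\varepsilon)q\leqslant p\circ\varphi_\varepsilon\leqslant(1+\varepsilon)q$ on $H$; (G3) if $N=0$, finite-order elements are dense. *)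

theory Defs
  imports "HOL-Algebra.Algebra" "HOL-Library.Extended_Real"
begin

text \<open>Groups are HOL-Algebra commutative groups, written multiplicatively:
  the group operation plays the role of +, the unit the role of 0, inv the role of minus.\<close>

definition valued_group :: "('a, 'm) monoid_scheme \<Rightarrow> ('a \<Rightarrow> real) \<Rightarrow> bool" where
  "valued_group G p \<longleftrightarrow> comm_group G
     \<and> (\<forall>x\<in>carrier G. 0 \<le> p x)
     \<and> (\<forall>x\<in>carrier G. p x = 0 \<longleftrightarrow> x = \<one>\<^bsub>G\<^esub>)
     \<and> (\<forall>x\<in>carrier G. p (inv\<^bsub>G\<^esub> x) = p x)
     \<and> (\<forall>x\<in>carrier G. \<forall>y\<in>carrier G. p (x \<otimes>\<^bsub>G\<^esub> y) \<le> p x + p y)"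

definition vdist :: "('a, 'm) monoid_scheme \<Rightarrow> ('a \<Rightarrow> real) \<Rightarrow> 'a \<Rightarrow> 'a \<Rightarrow> real" where
  "vdist G p x y = p (x \<otimes>\<^bsub>G\<^esub> inv\<^bsub>G\<^esub> y)"

definition class_O0 :: "('a, 'm) monoid_scheme \<Rightarrow> ('a \<Rightarrow> real) \<Rightarrow> bool" where
  "class_O0 G p \<longleftrightarrow> (\<forall>a\<in>carrier G. (\<lambda>n::nat. p (a [^]\<^bsub>G\<^esub> n) / real n) \<longlonglongrightarrow> 0)"

definition separable_vg :: "('a, 'm) monoid_scheme \<Rightarrow> ('a \<Rightarrow> real) \<Rightarrow> bool" where
  "separable_vg G p \<longleftrightarrow> (\<exists>D. countable D \<and> D \<subseteq> carrier G \<and>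
     (\<forall>x\<in>carrier G. \<forall>e>0. \<exists>d\<in>D. vdist G p x d < e))"

definition complete_vg :: "('a, 'm) monoid_scheme \<Rightarrow> ('a \<Rightarrow> real) \<Rightarrow> bool" where
  "complete_vg G p \<longleftrightarrow> (\<forall>s::nat \<Rightarrow> 'a. (\<forall>n. s n \<in> carrier G) \<and>
       (\<forall>e>0. \<exists>M. \<forall>m\<ge>M. \<forall>n\<ge>M. vdist G p (s m) (s n) < e)
     \<longrightarrow> (\<exists>x\<in>carrier G. \<forall>e>0. \<exists>M. \<forall>n\<ge>M. vdist G p (s n) x < e))"

definition has_exponent :: "('a, 'm) monoid_scheme \<Rightarrow> nat \<Rightarrow> bool" where
  "has_exponent G N \<longleftrightarrow> (\<forall>x\<in>carrier G. x [^]\<^bsub>G\<^esub> N = \<one>\<^bsub>G\<^esub>)"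

definition bounded_by :: "('a, 'm) monoid_scheme \<Rightarrow> ('a \<Rightarrow> real) \<Rightarrow> ereal \<Rightarrow> bool" where
  "bounded_by G p r \<longleftrightarrow> (\<forall>x\<in>carrier G. ereal (p x) \<le> r)"

definition in_frakG :: "ereal \<Rightarrow> nat \<Rightarrow> ('a, 'm) monoid_scheme \<Rightarrow> ('a \<Rightarrow> real) \<Rightarrow> bool" where
  "in_frakG r N G p \<longleftrightarrow> valued_group G p \<and> separable_vg G p \<and> class_O0 G p
     \<and> bounded_by G p r \<and> (N \<noteq> 0 \<longrightarrow> has_exponent G N)"

text \<open>(G2). Finite groups H are taken with carrier a subset of nat; every finite
  abelian group is isomorphic to such a group, so this is no restriction.\<close>
definition prop_G2 :: "ereal \<Rightarrow> nat \<Rightarrow> ('a, 'm) monoid_scheme \<Rightarrow> ('a \<Rightarrow> real) \<Rightarrow> bool" where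
  "prop_G2 r N G p \<longleftrightarrow>
    (\<forall>(H :: nat monoid) q K \<phi> \<epsilon>.
       valued_group H q \<and> finite (carrier H) \<and> bounded_by H q r
       \<and> (N \<noteq> 0 \<longrightarrow> has_exponent H N)
       \<and> subgroup K H
       \<and> \<phi> \<in> hom (H\<lparr>carrier := K\<rparr>) G \<and> (\<forall>x\<in>K. p (\<phi> x) = q x)
       \<and> 0 < \<epsilon> \<and> \<epsilon> < 1
     \<longrightarrow> (\<exists>\<psi>. \<psi> \<in> hom H G
            \<and> (\<forall>x\<in>K. vdist G p (\<phi> x) (\<psi> x) \<le> \<epsilon>)
            \<and> (\<forall>x\<in>carrier H. (1 - \<epsilon>) * q x \<le> p (\<psi> x) \<and> p (\<psi> x) \<le> (1 + \<epsilon>) * q x)))"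

definition prop_G3 :: "('a, 'm) monoid_scheme \<Rightarrow> ('a \<Rightarrow> real) \<Rightarrow> bool" where
  "prop_G3 G p \<longleftrightarrow> (\<forall>x\<in>carrier G. \<forall>e>0. \<exists>y\<in>carrier G.
      (\<exists>n::nat. 0 < n \<and> y [^]\<^bsub>G\<^esub> n = \<one>\<^bsub>G\<^esub>) \<and> vdist G p x y < e)"

definition is_bbG :: "ereal \<Rightarrow> nat \<Rightarrow> ('a, 'm) monoid_scheme \<Rightarrow> ('a \<Rightarrow> real) \<Rightarrow> bool" where
  "is_bbG r N G p \<longleftrightarrow> complete_vg G p \<and> in_frakG r N G p \<and> prop_G2 r N G p
     \<and> (N = 0 \<longrightarrow> prop_G3 G p)"

definition vcontinuous :: "('a, 'm) monoid_scheme \<Rightarrow> ('a \<Rightarrow> real) \<Rightarrow>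
    ('b, 'n) monoid_scheme \<Rightarrow> ('b \<Rightarrow> real) \<Rightarrow> ('a \<Rightarrow> 'b) \<Rightarrow> bool" where
  "vcontinuous G p G' p' f \<longleftrightarrow> (\<forall>x\<in>carrier G. \<forall>e>0. \<exists>d>0. \<forall>y\<in>carrier G.
      vdist G p y x < d \<longrightarrow> vdist G' p' (f y) (f x) < e)"

definition top_group_iso :: "('a, 'm) monoid_scheme \<Rightarrow> ('a \<Rightarrow> real) \<Rightarrow>
    ('b, 'n) monoid_scheme \<Rightarrow> ('b \<Rightarrow> real) \<Rightarrow> ('a \<Rightarrow> 'b) \<Rightarrow> bool" where
  "top_group_iso G p G' p' f \<longleftrightarrow> f \<in> hom G G' \<and> bij_betw f (carrier G) (carrier G')
     \<and> vcontinuous G p G' p' f \<and> vcontinuous G' p' G p (inv_into (carrier G) f)"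

end

theory Submission
  imports Defs
begin

text \<open>The exponent \<open>N\<close> is an algebraic invariant: (G2), applied to a cyclic group of order
  \<open>k\<close> embedded in \<open>(\<int>/k)\<^sup>2\<close> with the discrete value, yields elements of order exactly \<open>k\<close>,
  for \<open>k = N\<close> or, if \<open>N = 0\<close>, for arbitrarily large \<open>k\<close>.

  The radius \<open>r\<close> is detected by a topological invariant: whether every ball around the
  unit generates the group in a bounded number of steps. For \<open>r = \<infinity>\<close> this fails, since the
  same construction gives elements of arbitrarily large value. For \<open>r = 1\<close> it holds: if \<open>z\<close> has
  order \<open>m\<close> and \<open>\<pi> j = p (z\<^sup>j)\<close>, then (G2) applied to the diagonal of \<open>(\<int>/m)\<^sup>2\<close> with value
  \<open>(\<pi> a + \<pi> b) / 2\<close> writes \<open>z\<close> as a small error times two torsion elements of value about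
  \<open>p z / 2\<close>. Iterating \<open>n\<close> times and using density of torsion elements, every element is a
  product of at most \<open>3\<^sup>n + 1\<close> elements of value \<open>< \<delta>\<close> once \<open>\<delta> (3/2)\<^sup>n > 1\<close>.\<close>

definition pair_code :: "nat \<Rightarrow> nat \<Rightarrow> nat \<Rightarrow> nat" where
  "pair_code m a b = a mod m + m * (b mod m)"

text \<open>\<open>(\<int>/m)\<^sup>2\<close>, with \<open>(a, b)\<close> coded as \<open>a + m b\<close>, since (G2) only speaks about groups on \<open>nat\<close>.\<close>
definition Zmod_sq :: "nat \<Rightarrow> nat monoid" where
  "Zmod_sq m = \<lparr>carrier = {..<m * m},
     monoid.mult = (\<lambda>x y. pair_code m (x mod m + y mod m) (x div m + y div m)), one = 0\<rparr>"

lemma pair_code_less: "0 < m \<Longrightarrow> pair_code m a b < m * m"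
proof -
  assume m: "0 < m"
  have "a mod m + m * (b mod m) < m * Suc (b mod m)"
    using m by simp
  also have "\<dots> \<le> m * m"
    using m by (intro mult_le_mono2) (simp add: Suc_leI)
  finally show ?thesis by (simp add: pair_code_def)
qed

lemma pair_code_mod [simp]: "0 < m \<Longrightarrow> pair_code m a b mod m = a mod m"
  and pair_code_div [simp]: "0 < m \<Longrightarrow> pair_code m a b div m = b mod m"
  by (simp_all add: pair_code_def)

lemma pair_code_cong:
  "a mod m = a' mod m \<Longrightarrow> b mod m = b' mod m \<Longrightarrow> pair_code m a b = pair_code m a' b'"
  by (simp add: pair_code_def)

lemma pair_code_mod_div: "x < m * m \<Longrightarrow> pair_code m (x mod m) (x div m) = x"
  by (simp add: pair_code_def less_mult_imp_div_less)

lemma pair_code_0_0 [simp]: "pair_code m 0 0 = 0"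
  by (simp add: pair_code_def)

lemma Zmod_sq_carrier [simp]: "carrier (Zmod_sq m) = {..<m * m}"
  and Zmod_sq_one [simp]: "\<one>\<^bsub>Zmod_sq m\<^esub> = 0"
  and Zmod_sq_mult: "x \<otimes>\<^bsub>Zmod_sq m\<^esub> y = pair_code m (x mod m + y mod m) (x div m + y div m)"
  by (simp_all add: Zmod_sq_def)

lemma Zmod_sq_neg_mult:
  assumes m: "0 < m" and x: "x < m * m"
  shows "pair_code m (m - x mod m) (m - x div m) \<otimes>\<^bsub>Zmod_sq m\<^esub> x = 0"
proof -
  have "x div m < m" using x by (simp add: less_mult_imp_div_less)
  then have "pair_code m (m - x mod m) (m - x div m) \<otimes>\<^bsub>Zmod_sq m\<^esub> x = pair_code m 0 0"
    using m unfolding Zmod_sq_mult by (intro pair_code_cong) (simp_all add: mod_add_left_eq)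
  then show ?thesis by simp
qed

lemma Zmod_sq_comm_group: "0 < m \<Longrightarrow> comm_group (Zmod_sq m)"
proof (rule comm_groupI)
  fix x assume "0 < m" "x \<in> carrier (Zmod_sq m)"
  then show "\<exists>y\<in>carrier (Zmod_sq m). y \<otimes>\<^bsub>Zmod_sq m\<^esub> x = \<one>\<^bsub>Zmod_sq m\<^esub>"
    using Zmod_sq_neg_mult pair_code_less by (metis Zmod_sq_carrier Zmod_sq_one lessThan_iff)
qed (auto simp: Zmod_sq_mult pair_code_less pair_code_mod_div add.commute
      intro: pair_code_cong simp: mod_add_left_eq mod_add_right_eq add.left_commute)

lemma Zmod_sq_inv:
  assumes "0 < m" "x \<in> carrier (Zmod_sq m)"
  shows "inv\<^bsub>Zmod_sq m\<^esub> x = pair_code m (m - x mod m) (m - x div m)"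
  using assms Zmod_sq_neg_mult[OF assms(1)] pair_code_less
  by (intro group.inv_equality[OF comm_group.axioms(2)[OF Zmod_sq_comm_group]]) auto

lemma Zmod_sq_pow:
  assumes "0 < m" "x \<in> carrier (Zmod_sq m)"
  shows "x [^]\<^bsub>Zmod_sq m\<^esub> (j::nat) = pair_code m (j * (x mod m)) (j * (x div m))"
proof (induction j)
  case 0
  then show ?case by simp
next
  case (Suc j)
  then show ?case
    using assms by (simp add: Zmod_sq_mult) (intro pair_code_cong; simp add: mod_add_left_eq mod_add_right_eq add.commute)
qed

lemma Zmod_sq_pow_eq_one: "0 < m \<Longrightarrow> x \<in> carrier (Zmod_sq m) \<Longrightarrow> m dvd j \<Longrightarrow> x [^]\<^bsub>Zmod_sq m\<^esub> j = 0"
  by (auto simp: Zmod_sq_pow pair_code_def)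

lemma valued_group_comm_group: "valued_group G p \<Longrightarrow> comm_group G"
  by (simp add: valued_group_def)

lemma valued_group_nonneg: "valued_group G p \<Longrightarrow> x \<in> carrier G \<Longrightarrow> 0 \<le> p x"
  by (simp add: valued_group_def)

lemma valued_group_one: "valued_group G p \<Longrightarrow> p \<one>\<^bsub>G\<^esub> = 0"
  by (simp add: valued_group_def comm_group_def group.is_monoid)

lemma vdist_one: "valued_group G p \<Longrightarrow> x \<in> carrier G \<Longrightarrow> vdist G p x \<one>\<^bsub>G\<^esub> = p x"
  by (simp add: vdist_def valued_group_def comm_group_def group.is_monoid monoid.inv_one monoid.r_one)

definition listprod :: "('a, 'm) monoid_scheme \<Rightarrow> 'a list \<Rightarrow> 'a" where
  "listprod G xs = foldr (\<lambda>a b. a \<otimes>\<^bsub>G\<^esub> b) xs \<one>\<^bsub>G\<^esub>"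

lemma listprod_Nil [simp]: "listprod G [] = \<one>\<^bsub>G\<^esub>"
  and listprod_Cons [simp]: "listprod G (x # xs) = x \<otimes>\<^bsub>G\<^esub> listprod G xs"
  by (simp_all add: listprod_def)

lemma listprod_closed: "monoid G \<Longrightarrow> set xs \<subseteq> carrier G \<Longrightarrow> listprod G xs \<in> carrier G"
  by (induction xs) (auto intro: monoid.m_closed)

lemma listprod_append:
  "monoid G \<Longrightarrow> set xs \<subseteq> carrier G \<Longrightarrow> set ys \<subseteq> carrier G \<Longrightarrow>
    listprod G (xs @ ys) = listprod G xs \<otimes>\<^bsub>G\<^esub> listprod G ys"
  by (induction xs) (auto simp: monoid.m_assoc listprod_closed)

lemma hom_listprod:
  "group G \<Longrightarrow> group H \<Longrightarrow> f \<in> hom G H \<Longrightarrow> set xs \<subseteq> carrier G \<Longrightarrow>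
    f (listprod G xs) = listprod H (map f xs)"
  by (induction xs) (auto simp: hom_one hom_mult listprod_closed group.is_monoid)

definition small_products :: "('a, 'm) monoid_scheme \<Rightarrow> ('a \<Rightarrow> real) \<Rightarrow> real \<Rightarrow> nat \<Rightarrow> 'a set" where
  "small_products G p \<delta> n = {listprod G xs | xs.
     set xs \<subseteq> carrier G \<and> (\<forall>y\<in>set xs. p y < \<delta>) \<and> length xs \<le> n}"

text \<open>A property of the topological group: every neighbourhood \<open>U\<close> of the unit
  satisfies \<open>U\<^sup>n = G\<close> for some \<open>n\<close>.\<close>
definition ball_bounded :: "('a, 'm) monoid_scheme \<Rightarrow> ('a \<Rightarrow> real) \<Rightarrow> bool" where
  "ball_bounded G p \<longleftrightarrow> (\<forall>\<delta>>0. \<exists>n. carrier G \<subseteq> small_products G p \<delta> n)"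

lemma small_products_single:
  "monoid G \<Longrightarrow> y \<in> carrier G \<Longrightarrow> p y < \<delta> \<Longrightarrow> y \<in> small_products G p \<delta> 1"
  unfolding small_products_def by (rule CollectI, rule exI[of _ "[y]"]) simp

lemma small_products_mult:
  assumes "monoid G" "x \<in> small_products G p \<delta> n" "y \<in> small_products G p \<delta> n'"
  shows "x \<otimes>\<^bsub>G\<^esub> y \<in> small_products G p \<delta> (n + n')"
proof -
  obtain xs ys where "x = listprod G xs" "y = listprod G ys"
    and "set xs \<subseteq> carrier G" "\<forall>y\<in>set xs. p y < \<delta>" "length xs \<le> n"
    and "set ys \<subseteq> carrier G" "\<forall>y\<in>set ys. p y < \<delta>" "length ys \<le> n'"
    using assms(2,3) unfolding small_products_def by blast
  with assms(1) show ?thesis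
    unfolding small_products_def by (intro CollectI exI[of _ "xs @ ys"]) (auto simp: listprod_append)
qed

lemma small_products_mono: "n \<le> n' \<Longrightarrow> small_products G p \<delta> n \<subseteq> small_products G p \<delta> n'"
  unfolding small_products_def by fastforce

lemma small_products_value:
  assumes "valued_group G p" "0 \<le> \<delta>" "x \<in> small_products G p \<delta> n"
  shows "p x \<le> real n * \<delta>"
proof -
  obtain xs where xs: "x = listprod G xs" "set xs \<subseteq> carrier G" "\<forall>y\<in>set xs. p y < \<delta>" "length xs \<le> n"
    using assms(3) unfolding small_products_def by blast
  have monoid: "monoid G"
    using assms(1) by (simp add: valued_group_def comm_group_def group.is_monoid)
  have "p (listprod G xs) \<le> real (length xs) * \<delta>"
    using xs(2,3)
  proof (induction xs)
    case Nil
    then show ?case using valued_group_one[OF assms(1)] by simp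
  next
    case (Cons y ys)
    then have "p (listprod G (y # ys)) \<le> p y + p (listprod G ys)"
      using assms(1) listprod_closed[OF monoid] by (simp add: valued_group_def)
    with Cons show ?case by (simp add: algebra_simps)
  qed
  with xs assms(2) show ?thesis
    by (smt (verit) mult_right_mono of_nat_le_iff)
qed

lemma ball_bounded_hom_image:
  assumes vg: "valued_group G p" and vg': "valued_group G' p'"
    and hom: "f \<in> hom G G'" and onto: "f ` carrier G = carrier G'"
    and cont: "vcontinuous G p G' p' f" and bounded: "ball_bounded G p"
  shows "ball_bounded G' p'"
  unfolding ball_bounded_def
proof (intro allI impI)
  fix \<delta>' :: real assume "0 < \<delta>'"
  have groups: "group G" "group G'"
    using vg vg' by (simp_all add: valued_group_def comm_group_def)
  have one: "\<one>\<^bsub>G\<^esub> \<in> carrier G" "f \<one>\<^bsub>G\<^esub> = \<one>\<^bsub>G'\<^esub>"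
    using hom_one[OF hom groups] groups by (simp_all add: group.is_monoid)
  obtain \<delta> where "0 < \<delta>"
    and small: "\<And>y. y \<in> carrier G \<Longrightarrow> p y < \<delta> \<Longrightarrow> p' (f y) < \<delta>'"
    using cont \<open>0 < \<delta>'\<close> one vdist_one[OF vg] vdist_one[OF vg' hom_in_carrier[OF hom]]
    unfolding vcontinuous_def by metis
  obtain n where n: "carrier G \<subseteq> small_products G p \<delta> n"
    using bounded \<open>0 < \<delta>\<close> unfolding ball_bounded_def by blast
  have "f x \<in> small_products G' p' \<delta>' n" if "x \<in> carrier G" for x
  proof -
    obtain xs where "x = listprod G xs" "set xs \<subseteq> carrier G" "\<forall>y\<in>set xs. p y < \<delta>" "length xs \<le> n"
      using n \<open>x \<in> carrier G\<close> unfolding small_products_def by blast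
    then show ?thesis
      unfolding small_products_def using hom_in_carrier[OF hom] small
      by (intro CollectI exI[of _ "map f xs"]) (auto simp: hom_listprod[OF groups hom])
  qed
  then have "f ` carrier G \<subseteq> small_products G' p' \<delta>' n"
    by blast
  then show "\<exists>n. carrier G' \<subseteq> small_products G' p' \<delta>' n"
    using onto by auto
qed

lemma has_exponent_hom_image:
  assumes "group G" "group G'" "f \<in> hom G G'" "f ` carrier G = carrier G'" "has_exponent G M"
  shows "has_exponent G' M"
  unfolding has_exponent_def
proof
  fix x' assume "x' \<in> carrier G'"
  then obtain x where "x \<in> carrier G" "x' = f x"
    using assms(4) by blast
  then show "x' [^]\<^bsub>G'\<^esub> M = \<one>\<^bsub>G'\<^esub>"
    using assms(5) hom_nat_pow[OF assms(3) _ assms(1,2)] hom_one[OF assms(3,1,2)]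
    unfolding has_exponent_def by metis
qed

lemma (in group) pow_mod_ord: "x \<in> carrier G \<Longrightarrow> x [^] (n mod ord x) = x [^] n"
proof -
  assume x: "x \<in> carrier G"
  have "x [^] n = x [^] (n mod ord x) \<otimes> (x [^] ord x) [^] (n div ord x)"
    using x by (metis mod_mult_div_eq nat_pow_mult nat_pow_pow nat_pow_closed)
  then show ?thesis
    using x by simp
qed

lemma (in group) ord_eqI:
  assumes "x \<in> carrier G" "0 < k" "x [^] k = \<one>" "\<And>j. 0 < j \<Longrightarrow> j < k \<Longrightarrow> x [^] j \<noteq> \<one>"
  shows "ord x = k"
proof -
  have "ord x dvd k"
    using assms(1,3) pow_eq_id by blast
  then have "0 < ord x" "ord x \<le> k"
    using assms(2) by (auto intro: dvd_imp_le dvd_pos_nat)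
  then show ?thesis
    using assms(1,4) pow_ord_eq_1 le_neq_implies_less by blast
qed

lemma valued_group_pow_diff:
  fixes m :: nat
  assumes vg: "valued_group G p" and z: "z \<in> carrier G" "z [^]\<^bsub>G\<^esub> m = \<one>\<^bsub>G\<^esub>" and "a \<le> m"
  shows "p (z [^]\<^bsub>G\<^esub> (m - a)) = p (z [^]\<^bsub>G\<^esub> a)"
proof -
  interpret G: comm_group G
    using vg by (rule valued_group_comm_group)
  have "z [^]\<^bsub>G\<^esub> (m - a) \<otimes>\<^bsub>G\<^esub> z [^]\<^bsub>G\<^esub> a = \<one>\<^bsub>G\<^esub>"
    using \<open>a \<le> m\<close> z by (simp add: G.nat_pow_mult)
  then have "z [^]\<^bsub>G\<^esub> (m - a) = inv\<^bsub>G\<^esub> (z [^]\<^bsub>G\<^esub> a)"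
    using z(1) by (intro G.inv_equality[symmetric]) auto
  then show ?thesis
    using vg z(1) by (simp add: valued_group_def)
qed

lemma discrete_valued_group:
  assumes "comm_group H" "0 < c"
  shows "valued_group H (\<lambda>x. if x = \<one>\<^bsub>H\<^esub> then 0 else c)"
proof -
  interpret H: comm_group H by fact
  show ?thesis
    unfolding valued_group_def
    using assms(2) H.inv_eq_1_iff by (auto simp: H.comm_group_axioms)
qed

lemma Zmod_sq_diagonal_subgroup:
  assumes "0 < m"
  shows "subgroup {x \<in> carrier (Zmod_sq m). x mod m = x div m} (Zmod_sq m)"
proof -
  interpret H: comm_group "Zmod_sq m" using assms by (rule Zmod_sq_comm_group)
  show ?thesis
  proof (rule H.subgroupI)
    fix x assume "x \<in> {x \<in> carrier (Zmod_sq m). x mod m = x div m}"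
    then show "inv\<^bsub>Zmod_sq m\<^esub> x \<in> {x \<in> carrier (Zmod_sq m). x mod m = x div m}"
      using assms by (simp add: Zmod_sq_inv pair_code_less)
  qed (use assms in \<open>auto simp: Zmod_sq_mult pair_code_less intro!: exI[of _ 0]\<close>)
qed

lemma Zmod_sq_pow_hom:
  assumes "group G" "z \<in> carrier G" "z [^]\<^bsub>G\<^esub> m = \<one>\<^bsub>G\<^esub>" "0 < m"
  shows "(\<lambda>x. z [^]\<^bsub>G\<^esub> (x mod m)) \<in> hom ((Zmod_sq m)\<lparr>carrier := K\<rparr>) G"
proof -
  interpret G: group G by fact
  have "z [^]\<^bsub>G\<^esub> ((x mod m + y mod m) mod m) = z [^]\<^bsub>G\<^esub> (x mod m) \<otimes>\<^bsub>G\<^esub> z [^]\<^bsub>G\<^esub> (y mod m)" for x y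
    using G.pow_mod_ord[OF assms(2)] G.pow_eq_id[OF assms(2)] assms(2-4)
    by (metis G.nat_pow_mult mod_mod_cancel)
  then show ?thesis
    using assms(2,4) by (auto simp: hom_def Zmod_sq_mult)
qed

lemma Zmod_sq_pow_valued_group:
  assumes vg: "valued_group G p" and z: "z \<in> carrier G" "group.ord G z = m" "0 < m"
  shows "valued_group (Zmod_sq m) (\<lambda>x. (p (z [^]\<^bsub>G\<^esub> (x mod m)) + p (z [^]\<^bsub>G\<^esub> (x div m))) / 2)"
    (is "valued_group _ ?q")
proof -
  interpret G: comm_group G using vg by (rule valued_group_comm_group)
  interpret H: comm_group "Zmod_sq m" using z(3) by (rule Zmod_sq_comm_group)
  define \<pi> where "\<pi> (j::nat) = p (z [^]\<^bsub>G\<^esub> j)" for j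
  have p: "\<And>x. x \<in> carrier G \<Longrightarrow> 0 \<le> p x"
    "\<And>x. x \<in> carrier G \<Longrightarrow> p x = 0 \<longleftrightarrow> x = \<one>\<^bsub>G\<^esub>"
    "\<And>x y. x \<in> carrier G \<Longrightarrow> y \<in> carrier G \<Longrightarrow> p (x \<otimes>\<^bsub>G\<^esub> y) \<le> p x + p y"
    using vg by (auto simp: valued_group_def)
  have z_pow_m: "z [^]\<^bsub>G\<^esub> m = \<one>\<^bsub>G\<^esub>"
    using z G.pow_ord_eq_1 by blast
  have \<pi>_mod: "\<pi> (j mod m) = \<pi> j" for j
    using G.pow_mod_ord[OF z(1)] z(2) by (simp add: \<pi>_def)
  have \<pi>_nonneg: "0 \<le> \<pi> j" for j
    using p(1) z(1) by (simp add: \<pi>_def)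
  have \<pi>_eq_0: "\<pi> j = 0 \<longleftrightarrow> m dvd j" for j
    using p(2) G.pow_eq_id[OF z(1)] z by (simp add: \<pi>_def)
  have \<pi>_add: "\<pi> (a + b) \<le> \<pi> a + \<pi> b" for a b
    using p(3) z(1) by (simp add: \<pi>_def G.nat_pow_mult[symmetric])
  have \<pi>_neg: "\<pi> (m - a) = \<pi> a" if "a \<le> m" for a
    using valued_group_pow_diff[OF vg z(1) z_pow_m that] by (simp add: \<pi>_def)
  have div_less: "x div m < m" if "x \<in> carrier (Zmod_sq m)" for x
    using that by (simp add: less_mult_imp_div_less)
  show ?thesis
    unfolding valued_group_def
  proof (intro conjI ballI)
    fix x assume x: "x \<in> carrier (Zmod_sq m)"
    show "0 \<le> ?q x"
      using \<pi>_nonneg by (simp add: \<pi>_def[symmetric])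
    have "?q x = 0 \<longleftrightarrow> \<pi> (x mod m) = 0 \<and> \<pi> (x div m) = 0"
      using \<pi>_nonneg[of "x mod m"] \<pi>_nonneg[of "x div m"] by (auto simp: \<pi>_def[symmetric])
    also have "\<dots> \<longleftrightarrow> x mod m = 0 \<and> x div m = 0"
      using \<pi>_eq_0 div_less[OF x] z(3) by (metis dvd_0_right mod_less_divisor nat_dvd_not_less neq0_conv)
    finally have "?q x = 0 \<longleftrightarrow> x mod m = 0 \<and> x div m = 0" .
    then show "?q x = 0 \<longleftrightarrow> x = \<one>\<^bsub>Zmod_sq m\<^esub>"
      by (metis Zmod_sq_one div_0 mod_0 div_mult_mod_eq mult_0_right add_0)
    show "?q (inv\<^bsub>Zmod_sq m\<^esub> x) = ?q x"
      using \<pi>_mod[of "m - x mod m"] \<pi>_mod[of "m - x div m"] \<pi>_neg[of "x mod m"] \<pi>_neg[of "x div m"]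
        div_less[OF x] z(3) x
      by (simp add: Zmod_sq_inv \<pi>_def[symmetric])
  next
    fix x y assume "x \<in> carrier (Zmod_sq m)" "y \<in> carrier (Zmod_sq m)"
    show "?q (x \<otimes>\<^bsub>Zmod_sq m\<^esub> y) \<le> ?q x + ?q y"
      using \<pi>_add[of "x mod m" "y mod m"] \<pi>_add[of "x div m" "y div m"]
        \<pi>_mod[of "x mod m + y mod m"] \<pi>_mod[of "x div m + y div m"] z(3)
      by (simp add: Zmod_sq_mult \<pi>_def[symmetric] field_simps)
  qed (rule H.comm_group_axioms)
qed

lemma is_bbG_valued_group: "is_bbG r N G p \<Longrightarrow> valued_group G p"
  by (simp add: is_bbG_def in_frakG_def)

lemma is_bbG_bounded: "is_bbG r N G p \<Longrightarrow> x \<in> carrier G \<Longrightarrow> ereal (p x) \<le> r"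
  by (simp add: is_bbG_def in_frakG_def bounded_by_def)

lemma is_bbG_pow_exponent: "is_bbG r N G p \<Longrightarrow> N \<noteq> 0 \<Longrightarrow> x \<in> carrier G \<Longrightarrow> x [^]\<^bsub>G\<^esub> N = \<one>\<^bsub>G\<^esub>"
  by (simp add: is_bbG_def in_frakG_def has_exponent_def)

lemma is_bbG_G3: "is_bbG r 0 G p \<Longrightarrow> prop_G3 G p"
  by (simp add: is_bbG_def)

lemma bbG_approximate_extension:
  fixes H :: "nat monoid"
  assumes bb: "is_bbG r N G p" and H: "valued_group H q" "finite (carrier H)" "bounded_by H q r"
    "N \<noteq> 0 \<longrightarrow> has_exponent H N"
    and K: "subgroup K H" "\<phi> \<in> hom (H\<lparr>carrier := K\<rparr>) G" "\<forall>x\<in>K. p (\<phi> x) = q x"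
    and \<epsilon>: "0 < \<epsilon>" "\<epsilon> < 1"
  obtains \<psi> where "\<psi> \<in> hom H G" "\<forall>x\<in>K. vdist G p (\<phi> x) (\<psi> x) \<le> \<epsilon>"
    "\<forall>x\<in>carrier H. (1 - \<epsilon>) * q x \<le> p (\<psi> x) \<and> p (\<psi> x) \<le> (1 + \<epsilon>) * q x"
proof -
  have "prop_G2 r N G p"
    using bb by (simp add: is_bbG_def)
  from this[unfolded prop_G2_def, rule_format, OF conjI[OF H(1) conjI[OF H(2) conjI[OF H(3)
      conjI[OF H(4) conjI[OF K(1) conjI[OF K(2) conjI[OF K(3) conjI[OF \<epsilon>]]]]]]]]]
  show ?thesis
    using that by blast
qed

lemma bbG_discrete_embedding:
  assumes bb: "is_bbG r N G p" and k: "0 < k" "N \<noteq> 0 \<longrightarrow> k dvd N"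
    and c: "0 < c" "ereal c \<le> r"
  obtains \<psi> where "\<psi> \<in> hom (Zmod_sq k) G"
    "\<And>x. x \<in> carrier (Zmod_sq k) \<Longrightarrow> x \<noteq> 0 \<Longrightarrow> c \<le> 2 * p (\<psi> x)"
proof -
  have vg: "valued_group G p"
    using bb by (rule is_bbG_valued_group)
  interpret G: comm_group G
    using vg by (rule valued_group_comm_group)
  interpret H: comm_group "Zmod_sq k"
    using k(1) by (rule Zmod_sq_comm_group)
  define q where "q x = (if x = 0 then 0 else c)" for x :: nat
  have "valued_group (Zmod_sq k) q"
    using discrete_valued_group[OF H.comm_group_axioms c(1)] by (simp add: q_def[abs_def])
  moreover have "ereal 0 \<le> r"
    using c by (meson ereal_less_eq(3) less_imp_le order.trans)
  then have "bounded_by (Zmod_sq k) q r"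
    using c(2) by (simp add: bounded_by_def q_def)
  moreover have "N \<noteq> 0 \<longrightarrow> has_exponent (Zmod_sq k) N"
    using k(2) Zmod_sq_pow_eq_one[OF k(1)] by (simp add: has_exponent_def)
  moreover have "(\<lambda>_. \<one>\<^bsub>G\<^esub>) \<in> hom ((Zmod_sq k)\<lparr>carrier := {0}\<rparr>) G"
    by (simp add: hom_def)
  ultimately obtain \<psi> where \<psi>: "\<psi> \<in> hom (Zmod_sq k) G"
    and bounds: "\<forall>x\<in>carrier (Zmod_sq k). (1 - 1/2) * q x \<le> p (\<psi> x) \<and> p (\<psi> x) \<le> (1 + 1/2) * q x"
    using bbG_approximate_extension[OF bb, of "Zmod_sq k" q "{0}" "\<lambda>_. \<one>\<^bsub>G\<^esub>" "1/2"]
      H.triv_subgroup valued_group_one[OF vg] by (auto simp: q_def)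
  show ?thesis
  proof (rule that[OF \<psi>])
    fix x assume "x \<in> carrier (Zmod_sq k)" "x \<noteq> 0"
    then show "c \<le> 2 * p (\<psi> x)"
      using bounds[rule_format, of x] by (simp add: q_def)
  qed
qed

lemma bbG_element_of_order:
  assumes bb: "is_bbG r N G p" and k: "2 \<le> k" "N \<noteq> 0 \<longrightarrow> k dvd N"
    and c: "0 < c" "ereal c \<le> r"
  obtains x where "x \<in> carrier G" "group.ord G x = k" "c \<le> 2 * p x"
proof -
  interpret G: comm_group G
    using bb is_bbG_valued_group valued_group_comm_group by blast
  have "0 < k"
    using k by simp
  interpret H: comm_group "Zmod_sq k"
    using \<open>0 < k\<close> by (rule Zmod_sq_comm_group)
  obtain \<psi> where \<psi>: "\<psi> \<in> hom (Zmod_sq k) G"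
    and large: "\<And>x. x \<in> carrier (Zmod_sq k) \<Longrightarrow> x \<noteq> 0 \<Longrightarrow> c \<le> 2 * p (\<psi> x)"
    using bbG_discrete_embedding[OF bb \<open>0 < k\<close> k(2) c] by blast
  have "k < k * k"
    using mult_le_mono1[OF k(1), of k] k by simp
  then have carrier: "j \<in> carrier (Zmod_sq k)" if "j \<le> k" for j
    using that by (simp add: le_less_trans)
  have pow: "\<psi> 1 [^]\<^bsub>G\<^esub> j = \<psi> (j mod k)" if "j \<le> k" for j
  proof -
    have "\<psi> 1 [^]\<^bsub>G\<^esub> j = \<psi> (1 [^]\<^bsub>Zmod_sq k\<^esub> j)"
      using hom_nat_pow[OF \<psi> carrier H.is_group G.is_group] k by simp
    also have "1 [^]\<^bsub>Zmod_sq k\<^esub> j = j mod k"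
      using k carrier[of 1] by (simp add: Zmod_sq_pow pair_code_def)
    finally show ?thesis .
  qed
  have "\<psi> 1 \<in> carrier G"
    using \<psi> carrier[of 1] k by (simp add: hom_in_carrier)
  moreover have "G.ord (\<psi> 1) = k"
  proof (rule G.ord_eqI[OF \<open>\<psi> 1 \<in> carrier G\<close> \<open>0 < k\<close>])
    show "\<psi> 1 [^]\<^bsub>G\<^esub> k = \<one>\<^bsub>G\<^esub>"
      using pow[of k] hom_one[OF \<psi> H.is_group G.is_group] by simp
    show "\<psi> 1 [^]\<^bsub>G\<^esub> j \<noteq> \<one>\<^bsub>G\<^esub>" if "0 < j" "j < k" for j
      using large[OF carrier, of j] pow[of j] that c(1) valued_group_one[OF is_bbG_valued_group[OF bb]]
      by auto
  qed
  moreover have "c \<le> 2 * p (\<psi> 1)"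
    using large carrier[of 1] k by simp
  ultimately show ?thesis
    using that by blast
qed

lemma bbG_has_exponent_iff:
  assumes bb: "is_bbG r N G p" and "1 \<le> r" "0 < M"
  shows "has_exponent G M \<longleftrightarrow> N \<noteq> 0 \<and> N dvd M"
proof -
  interpret G: comm_group G
    using bb is_bbG_valued_group valued_group_comm_group by blast
  have dvd_M: "k dvd M" if exp: "has_exponent G M" and k: "2 \<le> k" "N \<noteq> 0 \<longrightarrow> k dvd N" for k
  proof -
    obtain x where "x \<in> carrier G" "G.ord x = k"
      using bbG_element_of_order[OF bb k, of 1] \<open>1 \<le> r\<close> by (metis one_ereal_def zero_less_one)
    then show ?thesis
      using exp G.pow_eq_id unfolding has_exponent_def by metis
  qed
  show ?thesis
  proof
    assume exp: "has_exponent G M"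
    have "N \<noteq> 0"
    proof
      assume "N = 0"
      then have "M + 1 dvd M"
        using dvd_M[OF exp, of "M + 1"] \<open>0 < M\<close> by simp
      then show False
        using \<open>0 < M\<close> by (auto dest: dvd_imp_le)
    qed
    moreover have "N dvd M"
      using dvd_M[OF exp, of N] \<open>N \<noteq> 0\<close> by (cases "N = 1") auto
    ultimately show "N \<noteq> 0 \<and> N dvd M" ..
  next
    assume "N \<noteq> 0 \<and> N dvd M"
    then show "has_exponent G M"
      using is_bbG_pow_exponent[OF bb] G.pow_eq_id unfolding has_exponent_def
      by (meson dvd_trans)
  qed
qed

lemma bbG_exponent_unique:
  assumes "is_bbG r N G p" "1 \<le> r" "is_bbG r' N' G' p'" "1 \<le> r'"
    and "\<And>M. 0 < M \<Longrightarrow> has_exponent G M \<longleftrightarrow> has_exponent G' M"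
  shows "N = N'"
proof -
  have divides: "N \<noteq> 0 \<and> N dvd M \<longleftrightarrow> N' \<noteq> 0 \<and> N' dvd M" if "0 < M" for M
    using assms(5)[OF that] bbG_has_exponent_iff[OF assms(1,2) that] bbG_has_exponent_iff[OF assms(3,4) that]
    by simp
  show ?thesis
    using divides[of N] divides[of N'] by (cases "N = 0"; cases "N' = 0") (auto intro: dvd_antisym)
qed

lemma bbG_infinite_radius_not_ball_bounded:
  assumes bb: "is_bbG \<infinity> N G p" and "N \<noteq> 1"
  shows "\<not> ball_bounded G p"
proof
  assume "ball_bounded G p"
  then obtain n where n: "carrier G \<subseteq> small_products G p 1 n"
    unfolding ball_bounded_def using zero_less_one by blast
  define k where "k = (if N = 0 then 2 else N)"
  have "2 \<le> k" "N \<noteq> 0 \<longrightarrow> k dvd N"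
    using \<open>N \<noteq> 1\<close> by (auto simp: k_def)
  then obtain x where "x \<in> carrier G" "2 * real n + 2 \<le> 2 * p x"
    using bbG_element_of_order[OF bb, of k "2 * real n + 2"] by auto
  moreover have "p x \<le> real n"
    using small_products_value[OF is_bbG_valued_group[OF bb], of 1] n \<open>x \<in> carrier G\<close> by auto
  ultimately show False
    by simp
qed

lemma bbG_diagonal_embedding:
  assumes bb: "is_bbG r N G p" and z: "z \<in> carrier G" "group.ord G z = m" "0 < m"
    and \<epsilon>: "0 < \<epsilon>" "\<epsilon> < 1"
  obtains \<psi> where "\<psi> \<in> hom (Zmod_sq m) G" "vdist G p z (\<psi> (pair_code m 1 1)) \<le> \<epsilon>"
    "p (\<psi> (pair_code m 1 0)) \<le> (1 + \<epsilon>) * p z / 2" "p (\<psi> (pair_code m 0 1)) \<le> (1 + \<epsilon>) * p z / 2"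
proof -
  have vg: "valued_group G p"
    using bb by (rule is_bbG_valued_group)
  interpret G: comm_group G
    using vg by (rule valued_group_comm_group)
  define q where "q x = (p (z [^]\<^bsub>G\<^esub> (x mod m)) + p (z [^]\<^bsub>G\<^esub> (x div m))) / 2" for x
  define K where "K = {x \<in> carrier (Zmod_sq m). x mod m = x div m}"
  define \<phi> where "\<phi> x = z [^]\<^bsub>G\<^esub> (x mod m)" for x
  have z_pow_1: "z [^]\<^bsub>G\<^esub> (1 mod m) = z"
    using G.pow_mod_ord[OF z(1), of 1] z by simp
  have "valued_group (Zmod_sq m) q"
    using Zmod_sq_pow_valued_group[OF vg z] by (simp add: q_def[abs_def])
  moreover have "bounded_by (Zmod_sq m) q r"
    unfolding bounded_by_def
  proof
    fix x
    have "ereal (q x) \<le> ereal (max (p (z [^]\<^bsub>G\<^esub> (x mod m))) (p (z [^]\<^bsub>G\<^esub> (x div m))))"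
      unfolding ereal_less_eq(3) q_def by (simp add: max_def)
    also have "\<dots> \<le> r"
      using is_bbG_bounded[OF bb] z(1) by (simp add: max_def)
    finally show "ereal (q x) \<le> r" .
  qed
  moreover have "N \<noteq> 0 \<longrightarrow> has_exponent (Zmod_sq m) N"
    using is_bbG_pow_exponent[OF bb _ z(1)] G.pow_eq_id[OF z(1)] Zmod_sq_pow_eq_one[OF z(3)] z(2)
    by (simp add: has_exponent_def)
  moreover have "subgroup K (Zmod_sq m)"
    unfolding K_def using z(3) by (rule Zmod_sq_diagonal_subgroup)
  moreover have "\<phi> \<in> hom ((Zmod_sq m)\<lparr>carrier := K\<rparr>) G"
    unfolding \<phi>_def using G.is_group z(1) G.pow_ord_eq_1[OF z(1)] z(2,3) by (intro Zmod_sq_pow_hom) auto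
  moreover have "\<forall>x\<in>K. p (\<phi> x) = q x"
    by (simp add: K_def \<phi>_def q_def)
  ultimately obtain \<psi> where \<psi>: "\<psi> \<in> hom (Zmod_sq m) G"
    and close: "\<forall>x\<in>K. vdist G p (\<phi> x) (\<psi> x) \<le> \<epsilon>"
    and bounds: "\<forall>x\<in>carrier (Zmod_sq m). (1 - \<epsilon>) * q x \<le> p (\<psi> x) \<and> p (\<psi> x) \<le> (1 + \<epsilon>) * q x"
    using bbG_approximate_extension[OF bb, of "Zmod_sq m" q K \<phi> \<epsilon>] \<epsilon> by auto
  have carrier: "pair_code m a b \<in> carrier (Zmod_sq m)" for a b
    using z(3) by (simp add: pair_code_less)
  show ?thesis
  proof (rule that[OF \<psi>])
    have "pair_code m 1 1 \<in> K" "\<phi> (pair_code m 1 1) = z"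
      using z(3) z_pow_1 by (simp_all add: K_def \<phi>_def pair_code_less)
    then show "vdist G p z (\<psi> (pair_code m 1 1)) \<le> \<epsilon>"
      using close by auto
    show "p (\<psi> (pair_code m 1 0)) \<le> (1 + \<epsilon>) * p z / 2"
      using bounds[rule_format, OF carrier[of 1 0]] z(3) z_pow_1 valued_group_one[OF vg]
      by (simp add: q_def)
    show "p (\<psi> (pair_code m 0 1)) \<le> (1 + \<epsilon>) * p z / 2"
      using bounds[rule_format, OF carrier[of 0 1]] z(3) z_pow_1 valued_group_one[OF vg]
      by (simp add: q_def)
  qed
qed

lemma bbG_halve_torsion:
  assumes bb: "is_bbG r N G p" and z: "z \<in> carrier G" "group.ord G z \<noteq> 0"
    and \<epsilon>: "0 < \<epsilon>" "\<epsilon> < 1"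
  obtains e h1 h2 where "e \<in> carrier G" "h1 \<in> carrier G" "h2 \<in> carrier G"
    "z = e \<otimes>\<^bsub>G\<^esub> (h1 \<otimes>\<^bsub>G\<^esub> h2)" "p e \<le> \<epsilon>"
    "p h1 \<le> (1 + \<epsilon>) * p z / 2" "p h2 \<le> (1 + \<epsilon>) * p z / 2"
    "group.ord G h1 \<noteq> 0" "group.ord G h2 \<noteq> 0"
proof -
  interpret G: comm_group G
    using bb is_bbG_valued_group valued_group_comm_group by blast
  define m where "m = G.ord z"
  have "0 < m"
    using z(2) by (simp add: m_def)
  interpret H: comm_group "Zmod_sq m"
    using \<open>0 < m\<close> by (rule Zmod_sq_comm_group)
  obtain \<psi> where \<psi>: "\<psi> \<in> hom (Zmod_sq m) G"
    and close: "vdist G p z (\<psi> (pair_code m 1 1)) \<le> \<epsilon>"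
    and halves: "p (\<psi> (pair_code m 1 0)) \<le> (1 + \<epsilon>) * p z / 2" "p (\<psi> (pair_code m 0 1)) \<le> (1 + \<epsilon>) * p z / 2"
    using bbG_diagonal_embedding[OF bb z(1) m_def[symmetric] \<open>0 < m\<close> \<epsilon>] by blast
  define u1 u2 d where "u1 = pair_code m 1 0" and "u2 = pair_code m 0 1" and "d = pair_code m 1 1"
  have carrier: "u1 \<in> carrier (Zmod_sq m)" "u2 \<in> carrier (Zmod_sq m)" "d \<in> carrier (Zmod_sq m)"
    using \<open>0 < m\<close> by (simp_all add: u1_def u2_def d_def pair_code_less)
  have "d = u1 \<otimes>\<^bsub>Zmod_sq m\<^esub> u2"
    using \<open>0 < m\<close> by (simp add: u1_def u2_def d_def Zmod_sq_mult pair_code_cong)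
  then have \<psi>_d: "\<psi> d = \<psi> u1 \<otimes>\<^bsub>G\<^esub> \<psi> u2"
    using \<psi> carrier by (simp add: hom_mult)
  have torsion: "G.ord (\<psi> u) \<noteq> 0" if "u \<in> carrier (Zmod_sq m)" for u
  proof -
    have "\<psi> u [^]\<^bsub>G\<^esub> m = \<one>\<^bsub>G\<^esub>"
      using hom_nat_pow[OF \<psi> that H.is_group G.is_group, of m] Zmod_sq_pow_eq_one[OF \<open>0 < m\<close> that]
        hom_one[OF \<psi> H.is_group G.is_group] by simp
    then show ?thesis
      using G.pow_eq_id hom_in_carrier[OF \<psi> that] \<open>0 < m\<close> by fastforce
  qed
  show ?thesis
  proof (rule that[of "z \<otimes>\<^bsub>G\<^esub> inv\<^bsub>G\<^esub> \<psi> d" "\<psi> u1" "\<psi> u2"])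
    show "z = z \<otimes>\<^bsub>G\<^esub> inv\<^bsub>G\<^esub> \<psi> d \<otimes>\<^bsub>G\<^esub> (\<psi> u1 \<otimes>\<^bsub>G\<^esub> \<psi> u2)"
      using z(1) hom_in_carrier[OF \<psi> carrier(3)] by (simp add: \<psi>_d[symmetric] G.m_assoc)
  qed (use z(1) hom_in_carrier[OF \<psi>] carrier close halves torsion in \<open>auto simp: vdist_def u1_def u2_def d_def\<close>)
qed

lemma bbG_torsion_small_products:
  assumes bb: "is_bbG r N G p" and "0 < \<delta>"
    and z: "z \<in> carrier G" "group.ord G z \<noteq> 0" "p z < \<delta> * (3/2) ^ n"
  shows "z \<in> small_products G p \<delta> (3 ^ n)"
proof -
  interpret G: comm_group G
    using bb is_bbG_valued_group valued_group_comm_group by blast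
  show ?thesis
    using z
  proof (induction n arbitrary: z)
    case 0
    then show ?case
      using small_products_single[where p = p, OF G.is_monoid] by simp
  next
    case (Suc n)
    define \<epsilon> where "\<epsilon> = min (\<delta> / 2) (1 / 3)"
    have \<epsilon>: "0 < \<epsilon>" "\<epsilon> < 1" "\<epsilon> < \<delta>" "1 + \<epsilon> \<le> 4 / 3"
      using \<open>0 < \<delta>\<close> by (auto simp: \<epsilon>_def)
    obtain e h1 h2 where eh: "e \<in> carrier G" "h1 \<in> carrier G" "h2 \<in> carrier G"
      "z = e \<otimes>\<^bsub>G\<^esub> (h1 \<otimes>\<^bsub>G\<^esub> h2)" "p e \<le> \<epsilon>"
      "p h1 \<le> (1 + \<epsilon>) * p z / 2" "p h2 \<le> (1 + \<epsilon>) * p z / 2"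
      "G.ord h1 \<noteq> 0" "G.ord h2 \<noteq> 0"
      using bbG_halve_torsion[OF bb Suc.prems(1,2) \<epsilon>(1,2)] by blast
    have "(1 + \<epsilon>) * p z \<le> (4/3) * p z"
      using mult_right_mono[OF \<epsilon>(4) valued_group_nonneg[OF is_bbG_valued_group[OF bb] Suc.prems(1)]] .
    then have "(1 + \<epsilon>) * p z / 2 \<le> (2/3) * p z"
      by simp
    also have "\<dots> < \<delta> * (3/2) ^ n"
      using Suc.prems(3) by simp
    finally have "p h1 < \<delta> * (3/2) ^ n" "p h2 < \<delta> * (3/2) ^ n"
      using eh(6,7) by auto
    then have "h1 \<otimes>\<^bsub>G\<^esub> h2 \<in> small_products G p \<delta> (3 ^ n + 3 ^ n)"
      by (intro small_products_mult[OF G.is_monoid] Suc.IH eh(2,3,8,9))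
    moreover have "e \<in> small_products G p \<delta> 1"
      using small_products_single[where p = p, OF G.is_monoid eh(1)] eh(5) \<epsilon>(3) by simp
    ultimately have "z \<in> small_products G p \<delta> (1 + (3 ^ n + 3 ^ n))"
      unfolding eh(4) by (rule small_products_mult[OF G.is_monoid, rotated])
    moreover have "1 + (3 ^ n + 3 ^ n) \<le> (3::nat) ^ Suc n"
      by simp
    ultimately show ?case
      by (meson small_products_mono subsetD)
  qed
qed

lemma bbG_torsion_dense:
  assumes bb: "is_bbG r N G p" and x: "x \<in> carrier G" and "0 < e"
  obtains y where "y \<in> carrier G" "group.ord G y \<noteq> 0" "vdist G p x y < e"
proof -
  interpret G: comm_group G
    using bb is_bbG_valued_group valued_group_comm_group by blast
  show ?thesis
  proof (cases "N = 0")
    case True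
    have "prop_G3 G p"
      using bb unfolding True by (rule is_bbG_G3)
    then obtain y where y: "y \<in> carrier G" "\<exists>n::nat. 0 < n \<and> y [^]\<^bsub>G\<^esub> n = \<one>\<^bsub>G\<^esub>" "vdist G p x y < e"
      using x \<open>0 < e\<close> unfolding prop_G3_def by blast
    then have "G.ord y \<noteq> 0"
      using G.ord_eq_0[OF y(1)] by blast
    then show ?thesis
      using that y by blast
  next
    case False
    have "G.ord x \<noteq> 0"
      using G.pow_eq_id[OF x] is_bbG_pow_exponent[OF bb False x] False by (metis dvd_0_left)
    moreover have "vdist G p x x = 0"
      using x valued_group_one[OF is_bbG_valued_group[OF bb]] by (simp add: vdist_def)
    ultimately show ?thesis
      using that x \<open>0 < e\<close> by auto
  qed
qed

lemma bbG_unit_radius_ball_bounded: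
  assumes bb: "is_bbG 1 N G p"
  shows "ball_bounded G p"
  unfolding ball_bounded_def
proof (intro allI impI)
  fix \<delta> :: real assume "0 < \<delta>"
  interpret G: comm_group G
    using bb is_bbG_valued_group valued_group_comm_group by blast
  obtain n where "1 / \<delta> < (3/2) ^ n"
    using real_arch_pow[of "3/2" "1/\<delta>"] by auto
  then have large: "1 < \<delta> * (3/2) ^ n"
    using \<open>0 < \<delta>\<close> by (simp add: field_simps)
  have "x \<in> small_products G p \<delta> (1 + 3 ^ n)" if x: "x \<in> carrier G" for x
  proof -
    obtain y where y: "y \<in> carrier G" "G.ord y \<noteq> 0" "p (x \<otimes>\<^bsub>G\<^esub> inv\<^bsub>G\<^esub> y) < \<delta>"
      using bbG_torsion_dense[OF bb x \<open>0 < \<delta>\<close>] unfolding vdist_def by blast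
    have "p y < \<delta> * (3/2) ^ n"
      using is_bbG_bounded[OF bb y(1)] large by simp
    then have "y \<in> small_products G p \<delta> (3 ^ n)"
      using bbG_torsion_small_products[OF bb \<open>0 < \<delta>\<close> y(1,2)] by blast
    moreover have "x \<otimes>\<^bsub>G\<^esub> inv\<^bsub>G\<^esub> y \<in> small_products G p \<delta> 1"
      using small_products_single[where p = p, OF G.is_monoid _ y(3)] x y(1) by simp
    ultimately have "(x \<otimes>\<^bsub>G\<^esub> inv\<^bsub>G\<^esub> y) \<otimes>\<^bsub>G\<^esub> y \<in> small_products G p \<delta> (1 + 3 ^ n)"
      using small_products_mult[OF G.is_monoid] by blast
    then show ?thesis
      using x y(1) by (simp add: G.m_assoc)
  qed
  then show "\<exists>n. carrier G \<subseteq> small_products G p \<delta> n"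
    by blast
qed

lemma bbG_ball_bounded_iff:
  assumes "is_bbG r N G p" "r \<in> {1, \<infinity>}" "N \<noteq> 1"
  shows "ball_bounded G p \<longleftrightarrow> r = 1"
proof (cases "r = 1")
  case True
  then show ?thesis
    using bbG_unit_radius_ball_bounded assms(1) by simp
next
  case False
  then show ?thesis
    using bbG_infinite_radius_not_ball_bounded assms by auto
qed

lemma top_group_iso_invariants:
  assumes vg: "valued_group G p" "valued_group G' p'" and f: "top_group_iso G p G' p' f"
  shows "has_exponent G M \<longleftrightarrow> has_exponent G' M"
    and "ball_bounded G p \<longleftrightarrow> ball_bounded G' p'"
proof -
  interpret G: comm_group G + G': comm_group G'
    using vg by (simp_all add: valued_group_comm_group)
  define g where "g = inv_into (carrier G) f"
  have "f \<in> iso G G'"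
    using f by (simp add: top_group_iso_def iso_def)
  then have "g \<in> iso G' G"
    unfolding g_def by (rule G.iso_set_sym)
  then have f_props: "f \<in> hom G G'" "f ` carrier G = carrier G'" "vcontinuous G p G' p' f"
    and g_props: "g \<in> hom G' G" "g ` carrier G' = carrier G" "vcontinuous G' p' G p g"
    using f \<open>f \<in> iso G G'\<close> by (auto simp: top_group_iso_def iso_def bij_betw_def g_def)
  show "has_exponent G M \<longleftrightarrow> has_exponent G' M"
    using has_exponent_hom_image[OF G.is_group G'.is_group f_props(1,2)]
      has_exponent_hom_image[OF G'.is_group G.is_group g_props(1,2)] by blast
  show "ball_bounded G p \<longleftrightarrow> ball_bounded G' p'"
    using ball_bounded_hom_image[OF vg f_props] ball_bounded_hom_image[OF vg(2,1) g_props] by blast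
qed

theorem corollary5p8:
  fixes G :: "('a, 'm) monoid_scheme" and p :: "'a \<Rightarrow> real"
    and G' :: "('b, 'n) monoid_scheme" and p' :: "'b \<Rightarrow> real"
    and r r' :: ereal and N N' :: nat
  assumes "r \<in> {1, \<infinity>}" and "r' \<in> {1, \<infinity>}"
    and "N \<noteq> 1" and "N' \<noteq> 1"
    and "(r, N) \<noteq> (r', N')"
    and "is_bbG r N G p" and "is_bbG r' N' G' p'"
  shows "\<not> (\<exists>f. top_group_iso G p G' p' f)"
proof
  assume "\<exists>f. top_group_iso G p G' p' f"
  then obtain f where f: "top_group_iso G p G' p' f" ..
  have vg: "valued_group G p" "valued_group G' p'"
    using assms(6,7) by (simp_all add: is_bbG_valued_group)
  have "1 \<le> r" "1 \<le> r'"
    using assms(1,2) by auto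
  then have "N = N'"
    using bbG_exponent_unique[OF assms(6) _ assms(7)] top_group_iso_invariants(1)[OF vg f] by blast
  have "r = 1 \<longleftrightarrow> r' = 1"
    using top_group_iso_invariants(2)[OF vg f]
      bbG_ball_bounded_iff[OF assms(6,1,3)] bbG_ball_bounded_iff[OF assms(7,2,4)] by simp
  then have "r = r'"
    using assms(1,2) by auto
  with \<open>N = N'\<close> assms(5) show False
    by simp
qed

end
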